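(* For the semi-discretization of the hyperbolized Sainte-Marie system with the energy-conservative fluxes described below (any $\alpha_1,\alpha_2,\alpha_3\in\mathbb{R}$, $\alpha_4=\alpha_2$), if the grid data satisfy the lake-at-rest state $v_i=w_i=p_i=0$ and $h_i+b_i=C$ for all $i$ (with a constant $C$), then $\partial_tu_i=0$ for all $i$.
   Context: State $u=(h,hv,hw,hp)$ with bathymetry $b_i$ attached to cell $i$; $g,c>0$ constants. The scheme is $$\partial_tu_i+\frac{f^{\mathrm{num}}_{i+1/2}-f^{\mathrm{num}}_{i-1/2}}{\Delta x}+\sum_{k=1}^4\Big(\alpha_k\frac{H^{\mathrm{num}}_{k,i+1/2}[\![g_k]\!]_{i+1/2}+H^{\mathrm{num}}_{k,i-1/2}[\![g_k]\!]_{i-1/2}}{2\Delta x}+(1-\alpha_k)H_k(u_i)\frac{[\![g_k]\!]_{i+1/2}+[\![g_k]\!]_{i-1/2}}{2\Delta x}\Big)=0,$$ with $H_1=(0,gh,0,0)^T$, $g_1=b$; $H_2=(0,2p,0,0)^T$, $g_2=b$; $H_3=(0,0,0,c^2h)^T$, $g_3=v$; $H_4=(0,0,0,-2c^2v)^T$, $g_4=b$; $H^{\mathrm{num}}_1=(0,g\{\{h\}\},0,0)^T$, $H^{\mathrm{num}}_2=(0,2\{\{p\}\},0,0)^T$, $H^{\mathrm{num}}_3=(0,0,0,c^2\{\{h\}\})^T$, $H^{\mathrm{num}}_4=(0,0,0,-2c^2\{\{v\}\})^T$; and $f^{\mathrm{num}}=(f^h,f^{hv},f^{hw},f^{hp})$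 with $f^h=\alpha_1\{\{h\}\}\{\{v\}\}+(1-\alpha_1)\{\{hv\}\}$, $f^{hv}=f^h\{\{v\}\}+(1-\alpha_1)g\{\{h\}\}^2+(\alpha_1-\tfrac12)g\{\{h^2\}\}+\alpha_3\{\{p\}\}\{\{h\}\}+(1-\alpha_3)\{\{ph\}\}$, $f^{hw}=f^h\{\{w\}\}$, $f^{hp}=f^h\{\{p\}\}$. Here $\{\{a\}\}=\tfrac12(a_-+a_+)$, $[\![a]\!]=a_+-a_-$, and subscript $i+1/2$ means evaluation at $(u_i,u_{i+1})$. *)

theory Defs
  imports "HOL-Analysis.Analysis"
begin

definition avg :: "real \<Rightarrow> real \<Rightarrow> real" where
  "avg a b = (a + b) / 2"

definition jmp :: "real \<Rightarrow> real \<Rightarrow> real" where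
  "jmp a b = b - a"

text \<open>Cell states are given by the primitive variables (h, v, w, p); the conserved
  state is u = (h, h v, h w, h p).\<close>
definition flux_h :: "real \<Rightarrow> real \<Rightarrow> real \<Rightarrow> real \<Rightarrow> real \<Rightarrow> real" where
  "flux_h a1 hL vL hR vR =
     a1 * avg hL hR * avg vL vR + (1 - a1) * avg (hL * vL) (hR * vR)"

definition flux_num ::
  "real \<Rightarrow> real \<Rightarrow> real \<Rightarrow> real \<times> real \<times> real \<times> real \<Rightarrow> real \<times> real \<times> real \<times> real
     \<Rightarrow> real \<times> real \<times> real \<times> real" where
  "flux_num a1 a3 g uL uR =
     (case uL of (hL, vL, wL, pL) \<Rightarrow> case uR of (hR, vR, wR, pR) \<Rightarrow>
       let fh = flux_h a1 hL vL hR vR in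
       (fh,
        fh * avg vL vR + (1 - a1) * g * (avg hL hR)\<^sup>2 + (a1 - 1/2) * g * avg (hL\<^sup>2) (hR\<^sup>2)
          + a3 * avg pL pR * avg hL hR + (1 - a3) * avg (pL * hL) (pR * hR),
        fh * avg wL wR,
        fh * avg pL pR))"

definition nc_term :: "real \<Rightarrow> real \<Rightarrow> real \<Rightarrow> real \<Rightarrow> real \<Rightarrow> real \<Rightarrow> real \<Rightarrow> real" where
  "nc_term alpha dx Hp Hm Hi jp jm =
     alpha * (Hp * jp + Hm * jm) / (2 * dx) + (1 - alpha) * Hi * (jp + jm) / (2 * dx)"

text \<open>Right-hand side R_i of the semi-discretization, so that the scheme reads
  d/dt u_i + R_i = 0.  Grid data: h v w p b :: int \<Rightarrow> real; constants g, c;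
  parameters alpha_1..alpha_4; mesh width dx.\<close>
definition semidisc_rhs ::
  "real \<Rightarrow> real \<Rightarrow> real \<Rightarrow> real \<Rightarrow> real \<Rightarrow> real \<Rightarrow> real \<Rightarrow>
   (int \<Rightarrow> real) \<Rightarrow> (int \<Rightarrow> real) \<Rightarrow> (int \<Rightarrow> real) \<Rightarrow> (int \<Rightarrow> real) \<Rightarrow> (int \<Rightarrow> real) \<Rightarrow>
   int \<Rightarrow> real \<times> real \<times> real \<times> real" where
  "semidisc_rhs g c a1 a2 a3 a4 dx h v w p b i =
     (let U = (\<lambda>j. (h j, v j, w j, p j));
          Fp = flux_num a1 a3 g (U i) (U (i + 1));
          Fm = flux_num a1 a3 g (U (i - 1)) (U i);
          jbp = jmp (b i) (b (i + 1)); jbm = jmp (b (i - 1)) (b i);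
          jvp = jmp (v i) (v (i + 1)); jvm = jmp (v (i - 1)) (v i);
          hP = avg (h i) (h (i + 1)); hM = avg (h (i - 1)) (h i);
          pP = avg (p i) (p (i + 1)); pM = avg (p (i - 1)) (p i);
          vP = avg (v i) (v (i + 1)); vM = avg (v (i - 1)) (v i)
      in
      ((fst Fp - fst Fm) / dx,
       (fst (snd Fp) - fst (snd Fm)) / dx
         + nc_term a1 dx (g * hP) (g * hM) (g * h i) jbp jbm
         + nc_term a2 dx (2 * pP) (2 * pM) (2 * p i) jbp jbm,
       (fst (snd (snd Fp)) - fst (snd (snd Fm))) / dx,
       (snd (snd (snd Fp)) - snd (snd (snd Fm))) / dx
         + nc_term a3 dx (c\<^sup>2 * hP) (c\<^sup>2 * hM) (c\<^sup>2 * h i) jvp jvm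
         + nc_term a4 dx (- 2 * c\<^sup>2 * vP) (- 2 * c\<^sup>2 * vM) (- 2 * c\<^sup>2 * v i) jbp jbm))"

end

theory Submission
  imports Defs
begin

text \<open>At rest the velocities and the pressure vanish, so the flux reduces to its hydrostatic
  part and only the bathymetry product g h b_x survives among the nonconservative terms.
  At every interface the hydrostatic flux, corrected by the fluctuation the interface sends to
  the cell on either side, equals exactly the pressure g h^2/2 of that cell, for every value of
  alpha_1.  Hence the two interfaces of a cell contribute g h_i^2/2 - g h_i^2/2 = 0.\<close>

definition hydrostatic_flux :: "real \<Rightarrow> real \<Rightarrow> real \<Rightarrow> real \<Rightarrow> real" where
  "hydrostatic_flux a1 g hL hR =
     (1 - a1) * g * (avg hL hR)\<^sup>2 + (a1 - 1/2) * g * avg (hL\<^sup>2) (hR\<^sup>2)"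

lemma flux_num_at_rest:
  "flux_num a1 a3 g (hL, 0, 0, 0) (hR, 0, 0, 0) = (0, hydrostatic_flux a1 g hL hR, 0, 0)"
  by (simp add: flux_num_def flux_h_def hydrostatic_flux_def avg_def)

lemma hydrostatic_flux_minus_left_fluctuation:
  "hydrostatic_flux a1 g hL hR - (a1 * g * avg hL hR + (1 - a1) * g * hL) * jmp hL hR / 2
     = g * hL\<^sup>2 / 2"
  by (simp add: hydrostatic_flux_def avg_def jmp_def field_simps power2_eq_square)

lemma hydrostatic_flux_plus_right_fluctuation:
  "hydrostatic_flux a1 g hL hR + (a1 * g * avg hL hR + (1 - a1) * g * hR) * jmp hL hR / 2
     = g * hR\<^sup>2 / 2"
  by (simp add: hydrostatic_flux_def avg_def jmp_def field_simps power2_eq_square)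

lemma nc_term_no_jumps: "nc_term alpha dx Hp Hm Hi 0 0 = 0"
  by (simp add: nc_term_def)

lemma nc_term_vanishing_coefficients: "nc_term alpha dx 0 0 0 jp jm = 0"
  by (simp add: nc_term_def)

lemma jmp_bathymetry_lake_at_rest:
  assumes "hL + bL = C" and "hR + bR = C"
  shows "jmp bL bR = - jmp hL hR"
  using assms by (simp add: jmp_def)

lemma hydrostatic_momentum_balance:
  "(hydrostatic_flux a1 g h0 hP - hydrostatic_flux a1 g hM h0) / dx
     + nc_term a1 dx (g * avg h0 hP) (g * avg hM h0) (g * h0) (- jmp h0 hP) (- jmp hM h0) = 0"
proof -
  let ?left = "(a1 * g * avg h0 hP + (1 - a1) * g * h0) * jmp h0 hP / 2"
  let ?right = "(a1 * g * avg hM h0 + (1 - a1) * g * h0) * jmp hM h0 / 2"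
  have "(hydrostatic_flux a1 g h0 hP - hydrostatic_flux a1 g hM h0) / dx
          + nc_term a1 dx (g * avg h0 hP) (g * avg hM h0) (g * h0) (- jmp h0 hP) (- jmp hM h0)
        = ((hydrostatic_flux a1 g h0 hP - ?left) - (hydrostatic_flux a1 g hM h0 + ?right)) / dx"
    by (simp add: nc_term_def add_divide_distrib diff_divide_distrib algebra_simps)
  also have "\<dots> = 0"
    by (simp only: hydrostatic_flux_minus_left_fluctuation hydrostatic_flux_plus_right_fluctuation)
      simp
  finally show ?thesis .
qed

lemma semidisc_rhs_lake_at_rest:
  assumes "\<And>j. v j = 0" "\<And>j. w j = 0" "\<And>j. p j = 0" "\<And>j. h j + b j = C"
  shows "semidisc_rhs g c a1 a2 a3 a4 dx h v w p b i = 0"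
proof -
  have jmp_b: "jmp (b j) (b (j + 1)) = - jmp (h j) (h (j + 1))" for j
    using jmp_bathymetry_lake_at_rest assms(4) by blast
  have "jmp (b (i - 1)) (b i) = - jmp (h (i - 1)) (h i)"
    using jmp_b[of "i - 1"] by simp
  moreover have "avg 0 0 = 0" "jmp 0 0 = 0"
    by (simp_all add: avg_def jmp_def)
  ultimately show ?thesis
    using hydrostatic_momentum_balance[of a1 g "h i" "h (i + 1)" "h (i - 1)" dx]
    by (simp add: semidisc_rhs_def assms(1-3) jmp_b flux_num_at_rest
        nc_term_no_jumps nc_term_vanishing_coefficients zero_prod_def)
qed

text \<open>Lake at rest is preserved for all g, c, dx and alpha_1, ..., alpha_4.\<close>

theorem mainTheorem10:
  fixes g c a1 a2 a3 a4 dx C :: real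
    and h v w p b :: "int \<Rightarrow> real"
    and dudt :: "int \<Rightarrow> real \<times> real \<times> real \<times> real"
  assumes "g > 0" and "c > 0" and "dx > 0"
    and "a4 = a2"
    and scheme: "\<And>i. dudt i + semidisc_rhs g c a1 a2 a3 a4 dx h v w p b i = 0"
    and rest: "\<And>i. v i = 0" "\<And>i. w i = 0" "\<And>i. p i = 0" "\<And>i. h i + b i = C"
  shows "\<forall>i. dudt i = 0"
proof
  fix i
  show "dudt i = 0"
    using scheme[of i] semidisc_rhs_lake_at_rest[OF rest] by simp
qed

end
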